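(* Let $b\ge a>0$ and $m\in\mathbb{R}$, and let $f$ be a function on $(0,\infty)$ which is nonnegative and increasing on $(0,b)$ and satisfies $f(x)\ge m$ for $x\ge b$. Then for every $\xi>0$, \[f(a)\le\frac{e^{a\xi}\,\xi\,\mathcal{L}f(\xi)-m\,e^{-(b-a)\xi}}{1-e^{-(b-a)\xi}}.\]
   Context: $\mathcal{L}f(\xi)=\int_0^\infty e^{-\xi x}f(x)\,dx$ denotes the Laplace transform (assumed finite). *)

theory Defs
  imports "HOL-Analysis.Analysis"
begin

definition laplace :: "(real \<Rightarrow> real) \<Rightarrow> real \<Rightarrow> real" where
  "laplace f \<xi> = (LBINT x:{0<..}. exp (- \<xi> * x) * f x)"

end

theory Submission
  imports Defs
begin

text \<open>Split the Laplace integral at \<open>a\<close> and \<open>b\<close>. On \<open>(0, a)\<close> the integrand is nonnegative, on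
  \<open>[a, b)\<close> monotonicity gives \<open>f x \<ge> f a\<close>, and on \<open>[b, \<infinity>)\<close> we have \<open>f x \<ge> m\<close>. Integrating the
  exponential weight over the last two pieces yields
  \<open>\<xi> \<L>f(\<xi>) \<ge> f(a) (exp(-a\<xi>) - exp(-b\<xi>)) + m exp(-b\<xi>)\<close>, which rearranges to the claim.\<close>

lemma set_integrable_exp_neg_atLeast:
  fixes \<xi> c :: real
  assumes "0 < \<xi>"
  shows "set_integrable lborel {c..} (\<lambda>x. exp (- \<xi> * x))"
proof -
  have "(\<lambda>x. exp (- \<xi> * x)) absolutely_integrable_on {c..}"
    by (intro nonnegative_absolutely_integrable_1 integrable_on_exp_minus_to_infinity assms) auto
  then show ?thesis
    unfolding set_integrable_def
    by (subst (asm) integrable_completion)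
       (auto intro!: borel_measurable_continuous_on_indicator continuous_intros)
qed

lemma set_integral_exp_neg_atLeast:
  fixes \<xi> c :: real
  assumes "0 < \<xi>"
  shows "(LINT x:{c..}|lborel. exp (- \<xi> * x)) = exp (- \<xi> * c) / \<xi>"
  using set_borel_integral_eq_integral(2)[OF set_integrable_exp_neg_atLeast[OF assms]]
    has_integral_exp_minus_to_infinity[OF assms]
  by (simp add: integral_unique)

lemma set_integral_Un_disjoint:
  fixes g :: "'a \<Rightarrow> real"
  assumes "set_integrable M (A \<union> B) g" "A \<inter> B = {}" "A \<in> sets M" "B \<in> sets M"
  shows "(LINT x:A \<union> B|M. g x) = (LINT x:A|M. g x) + (LINT x:B|M. g x)"
  using assms by (intro set_integral_Un set_integrable_subset[OF assms(1)]) auto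

lemma set_integral_exp_neg_atLeastLessThan:
  fixes \<xi> c d :: real
  assumes "0 < \<xi>" "c \<le> d"
  shows "(LINT x:{c..<d}|lborel. exp (- \<xi> * x)) = (exp (- \<xi> * c) - exp (- \<xi> * d)) / \<xi>"
proof -
  have decomp: "{c..} = {c..<d} \<union> {d..}"
    using assms(2) by auto
  have "(LINT x:{c..}|lborel. exp (- \<xi> * x))
      = (LINT x:{c..<d}|lborel. exp (- \<xi> * x)) + (LINT x:{d..}|lborel. exp (- \<xi> * x))"
    unfolding decomp
    by (rule set_integral_Un_disjoint)
      (use set_integrable_exp_neg_atLeast[OF assms(1), of c] decomp in auto)
  then show ?thesis
    using set_integral_exp_neg_atLeast[OF assms(1), of c] set_integral_exp_neg_atLeast[OF assms(1), of d]
    by (simp add: diff_divide_distrib)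
qed

lemma set_integral_weighted_ge_const:
  fixes w g :: "'a \<Rightarrow> real"
  assumes "set_integrable M A w" "set_integrable M A (\<lambda>x. w x * g x)"
    and "\<And>x. x \<in> A \<Longrightarrow> 0 \<le> w x" "\<And>x. x \<in> A \<Longrightarrow> c \<le> g x"
  shows "c * (LINT x:A|M. w x) \<le> (LINT x:A|M. w x * g x)"
proof -
  have "(LINT x:A|M. c * w x) \<le> (LINT x:A|M. w x * g x)"
    using assms by (intro set_integral_mono set_integrable_mult_right)
      (auto simp: mult.commute mult_right_mono)
  then show ?thesis
    by simp
qed

lemma laplace_ge_step_bound:
  fixes f :: "real \<Rightarrow> real" and a b m \<xi> :: real
  assumes "0 < a" "a < b"
    and nonneg: "\<And>x. 0 < x \<Longrightarrow> x < b \<Longrightarrow> 0 \<le> f x"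
    and mono: "mono_on {0<..<b} f"
    and tail: "\<And>x. b \<le> x \<Longrightarrow> m \<le> f x"
    and "0 < \<xi>"
    and integrable: "set_integrable lborel {0<..} (\<lambda>x. exp (- \<xi> * x) * f x)"
  shows "f a * (exp (- \<xi> * a) - exp (- \<xi> * b)) + m * exp (- \<xi> * b) \<le> \<xi> * laplace f \<xi>"
proof -
  let ?E = "\<lambda>x. exp (- \<xi> * x)" and ?F = "\<lambda>x. exp (- \<xi> * x) * f x"
  have integrable_on: "set_integrable lborel S ?F" if "S \<subseteq> {0<..}" "S \<in> sets lborel" for S
    using set_integrable_subset[OF integrable] that by blast
  have E_integrable_on: "set_integrable lborel S ?E" if "S \<subseteq> {0..}" "S \<in> sets lborel" for S
    using set_integrable_subset[OF set_integrable_exp_neg_atLeast[OF \<open>0 < \<xi>\<close>]] that by blast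
  have "{0<..} = ({0<..<a} \<union> {a..<b}) \<union> {b..}"
    using assms(1,2) by auto
  then have "laplace f \<xi>
      = (LINT x:{0<..<a} \<union> {a..<b}|lborel. ?F x) + (LINT x:{b..}|lborel. ?F x)"
    unfolding laplace_def
    by (simp only:) (rule set_integral_Un_disjoint; use integrable_on assms(1,2) in auto)
  also have "(LINT x:{0<..<a} \<union> {a..<b}|lborel. ?F x)
      = (LINT x:{0<..<a}|lborel. ?F x) + (LINT x:{a..<b}|lborel. ?F x)"
    using assms(1) by (intro set_integral_Un_disjoint integrable_on) auto
  finally have split: "laplace f \<xi> = (LINT x:{0<..<a}|lborel. ?F x) + (LINT x:{a..<b}|lborel. ?F x)
      + (LINT x:{b..}|lborel. ?F x)" .
  have "0 * (LINT x:{0<..<a}|lborel. ?E x) \<le> (LINT x:{0<..<a}|lborel. ?F x)"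
    using nonneg assms(2)
    by (intro set_integral_weighted_ge_const integrable_on E_integrable_on) auto
  moreover have "f a * (LINT x:{a..<b}|lborel. ?E x) \<le> (LINT x:{a..<b}|lborel. ?F x)"
    using assms(1,2) by (intro set_integral_weighted_ge_const integrable_on E_integrable_on)
      (auto intro: mono_onD[OF mono])
  moreover have "m * (LINT x:{b..}|lborel. ?E x) \<le> (LINT x:{b..}|lborel. ?F x)"
    using assms(1,2) by (intro set_integral_weighted_ge_const integrable_on E_integrable_on tail) auto
  ultimately have "f a * ((exp (- \<xi> * a) - exp (- \<xi> * b)) / \<xi>) + m * (exp (- \<xi> * b) / \<xi>)
      \<le> laplace f \<xi>"
    using split
    unfolding set_integral_exp_neg_atLeastLessThan[OF \<open>0 < \<xi>\<close> less_imp_le[OF \<open>a < b\<close>]]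
      set_integral_exp_neg_atLeast[OF \<open>0 < \<xi>\<close>]
    by linarith
  then show ?thesis
    using \<open>0 < \<xi>\<close> by (simp add: field_simps)
qed

theorem proposition2p13:
  fixes f :: "real \<Rightarrow> real" and a b m \<xi> :: real
  assumes "0 < a" and "a < b"
    and "\<And>x. 0 < x \<Longrightarrow> x < b \<Longrightarrow> 0 \<le> f x"
    and "mono_on {0<..<b} f"
    and "\<And>x. b \<le> x \<Longrightarrow> m \<le> f x"
    and "0 < \<xi>"
    and "set_integrable lborel {0<..} (\<lambda>x. exp (- \<xi> * x) * f x)"
  shows "f a \<le> (exp (a * \<xi>) * \<xi> * laplace f \<xi> - m * exp (- (b - a) * \<xi>))
                 / (1 - exp (- (b - a) * \<xi>))"
proof -
  let ?q = "exp (- (b - a) * \<xi>)"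
  have "exp (a * \<xi>) * (f a * (exp (- \<xi> * a) - exp (- \<xi> * b)) + m * exp (- \<xi> * b))
      \<le> exp (a * \<xi>) * (\<xi> * laplace f \<xi>)"
    using laplace_ge_step_bound[OF assms] by simp
  moreover have "exp (a * \<xi>) * exp (- \<xi> * a) = 1" "exp (a * \<xi>) * exp (- \<xi> * b) = ?q"
    by (simp_all flip: exp_add) (simp_all add: algebra_simps)
  ultimately have "f a * (1 - ?q) + m * ?q \<le> exp (a * \<xi>) * \<xi> * laplace f \<xi>"
    by (simp add: algebra_simps)
  moreover have "0 < 1 - ?q"
    using assms(2,6) by (simp add: mult_neg_pos)
  ultimately show ?thesis
    by (simp add: pos_le_divide_eq)
qed

end
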